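(* Let $S\subset\mathbb{R}^3$ be the sphere of radius $1/2$ centered at $(0,0,1/2)$, and let $\pi_S:\mathbb{R}^2\to S$ be the stereographic projection (identifying $\mathbb{R}^2$ with the plane $z=0$, a point $(x,y,0)$ is mapped to the intersection point, other than $N=(0,0,1)$, of $S$ with the line through $N$ and $(x,y,0)$). Let $A\subset\mathbb{R}^2$ be an unbounded set with $0\notin\overline A$. Then $\overline{\dim}_BA=\overline{\dim}_B\pi_S(A)$ and $\underline{\dim}_BA=\underline{\dim}_B\pi_S(A)$, where the box dimensions of $\pi_S(A)$ are computed as a subset of $\mathbb{R}^3$. Furthermore, if $A$ is Minkowski nondegenerate, then so is $\pi_S(A)$.
   Context: For a nonempty bounded $B\subset\mathbb{R}^n$, with $B_\varepsilon$ its Euclidean $\varepsilon$-neighbourhood in $\mathbb{R}^n$ and $|B_\varepsilon|$ its Lebesgue measure, $\mathcal M^{*s}(B)=\limsup_{\varepsilon\to0}|B_\varepsilon|/\varepsilon^{n-s}$, $\mathcal M_*^s(B)$ is the same with $\liminf$, $\overline{\dim}_BB=\inf\{s\ge0:\mathcal M^{*s}(B)=0\}$, $\underline{\dim}_BB=\inf\{s\ge0:\mathcal M_*^{s}(B)=0\}$; $B$ is Minkowski nondegenerate if there is $d\ge0$ with $0<\mathcal M_*^d(B)\le\mathcal M^{*d}(B)<\infty$. For an unbounded $A\subset\mathbb{R}^n$ with $0\notin\overline A$, with $\Phi(x)=x/|x|^2$, the box dimensions, Minkowski contents and Minkowski nondegeneracy of $A$ are defined as those of the bounded set $\Phi(A)$.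 *)

theory Defs
  imports "HOL-Analysis.Analysis"
begin

definition nbhd :: "'a::euclidean_space set \<Rightarrow> real \<Rightarrow> 'a set" where
  "nbhd B e = {x. \<exists>b\<in>B. dist x b < e}"

definition upper_mink :: "real \<Rightarrow> 'a::euclidean_space set \<Rightarrow> ereal" where
  "upper_mink s B = Limsup (at_right 0)
     (\<lambda>e. ereal (measure lebesgue (nbhd B e) / e powr (real DIM('a) - s)))"

definition lower_mink :: "real \<Rightarrow> 'a::euclidean_space set \<Rightarrow> ereal" where
  "lower_mink s B = Liminf (at_right 0)
     (\<lambda>e. ereal (measure lebesgue (nbhd B e) / e powr (real DIM('a) - s)))"

definition upper_box_dim :: "'a::euclidean_space set \<Rightarrow> real" where
  "upper_box_dim B = Inf {s. s \<ge> 0 \<and> upper_mink s B = 0}"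

definition lower_box_dim :: "'a::euclidean_space set \<Rightarrow> real" where
  "lower_box_dim B = Inf {s. s \<ge> 0 \<and> lower_mink s B = 0}"

definition mink_nondeg :: "'a::euclidean_space set \<Rightarrow> bool" where
  "mink_nondeg B \<longleftrightarrow> (\<exists>d\<ge>0. 0 < lower_mink d B \<and> lower_mink d B \<le> upper_mink d B
                          \<and> upper_mink d B < \<infinity>)"

definition inversion :: "'a::euclidean_space \<Rightarrow> 'a" where
  "inversion x = (1 / norm x ^ 2) *\<^sub>R x"

definition upper_box_dim_unb :: "'a::euclidean_space set \<Rightarrow> real" where
  "upper_box_dim_unb A = upper_box_dim (inversion ` A)"

definition lower_box_dim_unb :: "'a::euclidean_space set \<Rightarrow> real" where
  "lower_box_dim_unb A = lower_box_dim (inversion ` A)"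

definition mink_nondeg_unb :: "'a::euclidean_space set \<Rightarrow> bool" where
  "mink_nondeg_unb A \<longleftrightarrow> mink_nondeg (inversion ` A)"

definition north :: "real^3" where "north = vector [0, 0, 1]"

definition sphereS :: "(real^3) set" where
  "sphereS = sphere (vector [0, 0, 1/2]) (1/2)"

definition embed_plane :: "real^2 \<Rightarrow> real^3" where
  "embed_plane p = vector [p$1, p$2, 0]"

definition stereo :: "real^2 \<Rightarrow> real^3" where
  "stereo p = (THE q. q \<in> sphereS \<and> q \<noteq> north \<and>
                 (\<exists>t::real. q = north + t *\<^sub>R (embed_plane p - north)))"

end

theory Submission
  imports Defs
begin

text \<open>Writing \<open>B = \<Phi>(A)\<close>, the stereographic projection satisfies \<open>\<pi>\<^sub>S = g \<circ> \<Phi>\<close> on \<open>A\<close>,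
  where \<open>g(u) = \<Phi>(u\<^sub>1, u\<^sub>2, 1)\<close>. Since \<open>|\<Phi>(x) - \<Phi>(y)| = |x - y| / (|x| |y|)\<close>, the map \<open>g\<close>
  is bi-Lipschitz on the bounded set \<open>B\<close>. A bi-Lipschitz map between bounded subsets of
  \<open>\<real>\<^sup>m\<close> and \<open>\<real>\<^sup>n\<close> preserves Minkowski contents up to constant factors: for a maximal
  \<open>\<epsilon>\<close>-separated subset of \<open>B\<close> with \<open>N\<close> points, \<open>|B\<^sub>\<epsilon>|\<close> is comparable to \<open>N \<epsilon>\<^sup>m\<close>,
  while \<open>|g(B)\<^sub>\<epsilon>|\<close> is comparable to \<open>N \<epsilon>\<^sup>n\<close>. Hence box dimensions and
  nondegeneracy are the same for \<open>B\<close> and \<open>g(B) = \<pi>\<^sub>S(A)\<close>.\<close>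

section \<open>Volumes of unions of balls\<close>

lemma measure_ball_eq_unit_ball:
  fixes c :: "'a::euclidean_space"
  assumes "r \<ge> 0"
  shows "measure lebesgue (ball c r) = r ^ DIM('a) * measure lebesgue (ball (0::'a) 1)"
  using content_ball_conv_unit_ball[OF assms, of c] by simp

lemma measure_unit_ball_pos: "measure lebesgue (ball (0::'a::euclidean_space) 1) > 0"
  using content_ball_pos[of 1 "0::'a"] by simp

lemma measure_Union_disjoint_balls:
  fixes c :: "'i \<Rightarrow> 'a::euclidean_space"
  assumes "finite P" "r \<ge> 0" and sep: "\<forall>p\<in>P. \<forall>q\<in>P. p \<noteq> q \<longrightarrow> 2*r \<le> dist (c p) (c q)"
  shows "measure lebesgue (\<Union>p\<in>P. ball (c p) r)
           = real (card P) * (r ^ DIM('a) * measure lebesgue (ball (0::'a) 1))"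
proof -
  have "dist (c p) (c q) < 2*r" if "x \<in> ball (c p) r" "x \<in> ball (c q) r" for p q x
    using that dist_triangle3[of "c p" "c q" x] by (simp add: dist_commute)
  then have "disjnt (ball (c p) r) (ball (c q) r)" if "p \<in> P" "q \<in> P" "p \<noteq> q" for p q
    using sep that unfolding disjnt_def by (meson disjoint_iff not_le)
  then have "measure lebesgue (\<Union>p\<in>P. ball (c p) r) = (\<Sum>p\<in>P. measure lebesgue (ball (c p) r))"
    by (intro measure_UNION') (use assms in \<open>auto simp: pairwise_def\<close>)
  also have "\<dots> = (\<Sum>p\<in>P. r ^ DIM('a) * measure lebesgue (ball (0::'a) 1))"
    by (rule sum.cong[OF refl]) (rule measure_ball_eq_unit_ball[OF \<open>r \<ge> 0\<close>])
  finally show ?thesis by simp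
qed

lemma measure_Union_balls_le:
  fixes c :: "'i \<Rightarrow> 'a::euclidean_space"
  assumes "finite P" "r \<ge> 0"
  shows "measure lebesgue (\<Union>p\<in>P. ball (c p) r)
           \<le> real (card P) * (r ^ DIM('a) * measure lebesgue (ball (0::'a) 1))"
proof -
  have "measure lebesgue (\<Union>p\<in>P. ball (c p) r) \<le> (\<Sum>p\<in>P. measure lebesgue (ball (c p) r))"
    by (rule measure_UNION_le) (use assms in auto)
  also have "\<dots> = (\<Sum>p\<in>P. r ^ DIM('a) * measure lebesgue (ball (0::'a) 1))"
    by (rule sum.cong[OF refl]) (rule measure_ball_eq_unit_ball[OF \<open>r \<ge> 0\<close>])
  finally show ?thesis by simp
qed

section \<open>Neighbourhoods and separated sets\<close>

lemma nbhd_eq_Union_balls: "nbhd B e = (\<Union>b\<in>B. ball b e)"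
  unfolding nbhd_def by (auto simp: dist_commute)

lemma nbhd_sets_lebesgue: "nbhd B e \<in> sets lebesgue"
proof -
  have "open (nbhd B e)" unfolding nbhd_eq_Union_balls by auto
  then show ?thesis by (metis borel_open sets_completionI_sets sets_lborel)
qed

lemma nbhd_lmeasurable:
  assumes "bounded B"
  shows "nbhd B e \<in> lmeasurable"
proof (rule lmeasurable_open)
  obtain R where R: "\<forall>x\<in>B. norm x \<le> R" using assms bounded_iff by blast
  have "norm x \<le> R + e" if x: "x \<in> nbhd B e" for x
  proof -
    obtain b where "b \<in> B" "dist x b < e" using x unfolding nbhd_def by auto
    then show ?thesis using R norm_triangle_sub[of x b] by (force simp: dist_norm)
  qed
  then show "bounded (nbhd B e)" using bounded_iff by blast
qed (auto simp: nbhd_eq_Union_balls)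

lemma bounded_lipschitz_image:
  assumes "bounded B" "L-lipschitz_on B h"
  shows "bounded (h ` B)"
proof (cases "B = {}")
  case False
  then obtain b0 where b0: "b0 \<in> B" by blast
  obtain R where "\<forall>x\<in>B. dist b0 x \<le> R" using assms(1) bounded_any_center by blast
  then have "\<forall>x\<in>B. dist (h b0) (h x) \<le> L * R"
    using lipschitz_onD[OF assms(2) b0] lipschitz_on_nonneg[OF assms(2)]
    by (meson mult_left_mono order_trans)
  then show ?thesis unfolding bounded_def by blast
qed simp

text \<open>A maximal \<open>d\<close>-separated subset exists because the disjoint balls of radius \<open>d/2\<close>
  around its points fit in a fixed ball, which bounds its cardinality.\<close>

lemma exists_maximal_separated_subset:
  fixes B :: "'a::euclidean_space set"
  assumes "bounded B" "d > 0"
  obtains P where "finite P" "P \<subseteq> B" "\<forall>p\<in>P. \<forall>q\<in>P. p \<noteq> q \<longrightarrow> d \<le> dist p q"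
    "\<forall>x\<in>B. \<exists>p\<in>P. dist x p < d"
proof -
  define separated where
    "separated Q \<longleftrightarrow> finite Q \<and> Q \<subseteq> B \<and> (\<forall>p\<in>Q. \<forall>q\<in>Q. p \<noteq> q \<longrightarrow> d \<le> dist p q)" for Q
  define V where "V = measure lebesgue (ball (0::'a) 1)"
  have V: "V > 0" unfolding V_def by (rule measure_unit_ball_pos)
  obtain R where R: "R > 0" "\<forall>x\<in>B. norm x \<le> R" using assms(1) bounded_pos by blast
  define M where "M = nat \<lceil>(R+d)^DIM('a) / (d/2)^DIM('a)\<rceil> + 1"
  have card_bound: "card Q < M" if "separated Q" for Q
  proof -
    have "(\<Union>p\<in>Q. ball p (d/2)) \<subseteq> ball 0 (R+d)"
    proof
      fix x assume "x \<in> (\<Union>p\<in>Q. ball p (d/2))"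
      then obtain p where "p \<in> Q" "dist p x < d/2" by auto
      moreover have "norm p \<le> R" using R \<open>p \<in> Q\<close> \<open>separated Q\<close> unfolding separated_def by auto
      ultimately show "x \<in> ball 0 (R+d)"
        using norm_triangle_sub[of x p] assms(2) by (simp add: dist_norm norm_minus_commute)
    qed
    then have "measure lebesgue (\<Union>p\<in>Q. ball p (d/2)) \<le> measure lebesgue (ball (0::'a) (R+d))"
      by (rule measure_mono_fmeasurable)
        (use that in \<open>auto simp: separated_def intro!: sets.finite_UN\<close>)
    moreover have "measure lebesgue (\<Union>p\<in>Q. ball p (d/2)) = real (card Q) * ((d/2) ^ DIM('a) * V)"
      unfolding V_def using that assms(2)
      by (intro measure_Union_disjoint_balls[where c="\<lambda>x. x"]) (auto simp: separated_def)
    moreover have "measure lebesgue (ball (0::'a) (R+d)) = (R+d)^DIM('a) * V"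
      unfolding V_def using R assms by (intro measure_ball_eq_unit_ball) auto
    ultimately have "real (card Q) * (d/2) ^ DIM('a) \<le> (R+d)^DIM('a)"
      using V by (simp add: mult.assoc)
    then have "real (card Q) \<le> (R+d)^DIM('a) / (d/2) ^ DIM('a)"
      using assms(2) by (simp add: field_simps)
    then show ?thesis unfolding M_def by linarith
  qed
  have "separated {}" unfolding separated_def by auto
  from ex_has_greatest_nat[of separated "{}" card M, OF this] card_bound
  obtain P where P: "separated P" "\<And>Q. separated Q \<Longrightarrow> card Q \<le> card P" by blast
  have "\<exists>p\<in>P. dist x p < d" if x: "x \<in> B" for x
  proof (rule ccontr)
    assume "\<not> ?thesis"
    then have far: "\<forall>p\<in>P. d \<le> dist x p" by (auto simp: not_less)
    then have "x \<notin> P" using assms(2) by force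
    moreover have "separated (insert x P)" using P(1) x far unfolding separated_def
      by (auto simp: dist_commute)
    then have "card (insert x P) \<le> card P" by (rule P(2))
    ultimately show False using P(1) unfolding separated_def by simp
  qed
  with P(1) that show ?thesis unfolding separated_def by blast
qed

section \<open>Lipschitz images and Minkowski contents\<close>

lemma measure_nbhd_lipschitz_image_le:
  fixes B :: "'a::euclidean_space set" and h :: "'a \<Rightarrow> 'b::euclidean_space"
  assumes "L-lipschitz_on B h" "e > 0" "finite P" "P \<subseteq> B" "\<forall>x\<in>B. \<exists>p\<in>P. dist x p < e"
  shows "measure lebesgue (nbhd (h`B) e)
           \<le> real (card P) * (((1+L)*e)^DIM('b) * measure lebesgue (ball (0::'b) 1))"
proof -
  have L: "L \<ge> 0" using lipschitz_on_nonneg[OF assms(1)] .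
  have "nbhd (h`B) e \<subseteq> (\<Union>p\<in>P. ball (h p) ((1+L)*e))"
  proof
    fix x assume "x \<in> nbhd (h`B) e"
    then obtain y where y: "y \<in> B" "dist x (h y) < e" unfolding nbhd_def by auto
    then obtain p where p: "p \<in> P" "dist y p < e" using assms(5) by blast
    have "dist (h y) (h p) \<le> L * dist y p"
      by (rule lipschitz_onD[OF assms(1) y(1)]) (use p(1) assms(4) in blast)
    also have "\<dots> \<le> L * e" using p(2) L by (simp add: mult_left_mono)
    finally have "dist (h y) (h p) + dist x (h y) < (1+L)*e"
      using y(2) by (simp add: distrib_right)
    then have "dist (h p) x < (1+L)*e"
      using dist_triangle3[of "h p" x "h y"] by (simp add: dist_commute)
    with p(1) show "x \<in> (\<Union>p\<in>P. ball (h p) ((1+L)*e))" by auto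
  qed
  then have "measure lebesgue (nbhd (h`B) e) \<le> measure lebesgue (\<Union>p\<in>P. ball (h p) ((1+L)*e))"
    by (rule measure_mono_fmeasurable[OF _ nbhd_sets_lebesgue])
      (use assms(3) in \<open>auto intro!: fmeasurable.finite_UN\<close>)
  also have "\<dots> \<le> real (card P) * (((1+L)*e)^DIM('b) * measure lebesgue (ball (0::'b) 1))"
    by (rule measure_Union_balls_le) (use assms(2,3) L in auto)
  finally show ?thesis .
qed

lemma card_separated_le_measure_nbhd:
  fixes B :: "'a::euclidean_space set"
  assumes "bounded B" "e > 0" "finite P" "P \<subseteq> B" "\<forall>p\<in>P. \<forall>q\<in>P. p \<noteq> q \<longrightarrow> e \<le> dist p q"
  shows "real (card P) * ((e/2)^DIM('a) * measure lebesgue (ball (0::'a) 1))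
           \<le> measure lebesgue (nbhd B e)"
proof -
  have "(\<Union>p\<in>P. ball p (e/2)) \<subseteq> nbhd B e"
    using assms(2,4) unfolding nbhd_def by (force simp: dist_commute)
  then have "measure lebesgue (\<Union>p\<in>P. ball p (e/2)) \<le> measure lebesgue (nbhd B e)"
    by (rule measure_mono_fmeasurable)
      (use assms(1,3) nbhd_lmeasurable in \<open>auto intro!: sets.finite_UN\<close>)
  moreover have "measure lebesgue (\<Union>p\<in>P. ball p (e/2))
      = real (card P) * ((e/2)^DIM('a) * measure lebesgue (ball (0::'a) 1))"
    using assms(2,3,5) by (intro measure_Union_disjoint_balls[where c="\<lambda>x. x"]) auto
  ultimately show ?thesis by simp
qed

lemma nbhd_measure_lipschitz_image:
  fixes B :: "'a::euclidean_space set" and h :: "'a \<Rightarrow> 'b::euclidean_space"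
  assumes "bounded B" "L-lipschitz_on B h"
  obtains K where "K \<ge> 0" "\<And>e. e > 0 \<Longrightarrow>
    measure lebesgue (nbhd (h`B) e) * e^DIM('a) \<le> K * e^DIM('b) * measure lebesgue (nbhd B e)"
proof -
  define Va where "Va = measure lebesgue (ball (0::'a) 1)"
  define Vb where "Vb = measure lebesgue (ball (0::'b) 1)"
  have Va: "Va > 0" and Vb: "Vb > 0" unfolding Va_def Vb_def by (rule measure_unit_ball_pos)+
  have L: "L \<ge> 0" using lipschitz_on_nonneg[OF assms(2)] .
  define K where "K = (1+L)^DIM('b) * Vb * 2^DIM('a) / Va"
  have K: "K \<ge> 0" unfolding K_def using Va Vb L by simp
  have "measure lebesgue (nbhd (h`B) e) * e^DIM('a) \<le> K * e^DIM('b) * measure lebesgue (nbhd B e)"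
    if e: "e > 0" for e
  proof -
    obtain P where P: "finite P" "P \<subseteq> B" "\<forall>p\<in>P. \<forall>q\<in>P. p \<noteq> q \<longrightarrow> e \<le> dist p q"
      "\<forall>x\<in>B. \<exists>p\<in>P. dist x p < e"
      by (rule exists_maximal_separated_subset[OF assms(1) e])
    have "measure lebesgue (nbhd (h`B) e) * e^DIM('a)
        \<le> real (card P) * (((1+L)*e)^DIM('b) * Vb) * e^DIM('a)"
      using measure_nbhd_lipschitz_image_le[OF assms(2) e P(1,2,4)] e
      unfolding Vb_def by (simp add: mult_right_mono)
    also have "\<dots> = K * e^DIM('b) * (real (card P) * ((e/2)^DIM('a) * Va))"
      unfolding K_def power_mult_distrib power_divide using Va by (simp add: field_simps)
    also have "\<dots> \<le> K * e^DIM('b) * measure lebesgue (nbhd B e)"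
      using card_separated_le_measure_nbhd[OF assms(1) e P(1-3)] K e
      unfolding Va_def by (simp add: mult_left_mono)
    finally show ?thesis .
  qed
  with K show ?thesis by (rule that)
qed

lemma mink_nonneg: "upper_mink s B \<ge> 0" "lower_mink s B \<ge> 0"
proof -
  have ev: "\<forall>\<^sub>F e in at_right 0. 0 \<le> ereal (measure lebesgue (nbhd B e) / e powr (real DIM('a) - s))"
    using eventually_at_right_less[of "0::real"] by (rule eventually_mono) simp
  show "lower_mink s B \<ge> 0" unfolding lower_mink_def by (rule Liminf_bounded[OF ev])
  show "upper_mink s B \<ge> 0" unfolding upper_mink_def by (rule le_Limsup[OF _ ev]) simp
qed

lemma mink_le_of_nbhd_measure_le:
  fixes B :: "'a::euclidean_space set" and C :: "'b::euclidean_space set"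
  assumes K: "K \<ge> 0" and nbhd_le: "\<And>e. e > 0 \<Longrightarrow>
    measure lebesgue (nbhd C e) * e^DIM('a) \<le> K * e^DIM('b) * measure lebesgue (nbhd B e)"
  shows "upper_mink s C \<le> ereal K * upper_mink s B"
    and "lower_mink s C \<le> ereal K * lower_mink s B"
proof -
  define fB where "fB e = ereal (measure lebesgue (nbhd B e) / e powr (real DIM('a) - s))" for e
  define fC where "fC e = ereal (measure lebesgue (nbhd C e) / e powr (real DIM('b) - s))" for e
  have "fC e \<le> ereal K * fB e" if e: "e > 0" for e
  proof -
    have powr_a: "e powr (real DIM('a) - s) = e^DIM('a) / e powr s"
      and powr_b: "e powr (real DIM('b) - s) = e^DIM('b) / e powr s"
      using e by (simp_all add: powr_diff powr_realpow)
    have "measure lebesgue (nbhd C e) * e^DIM('a) * e powr s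
        \<le> K * e^DIM('b) * measure lebesgue (nbhd B e) * e powr s"
      using nbhd_le[OF e] by (simp add: mult_right_mono)
    then show ?thesis
      using e unfolding fB_def fC_def powr_a powr_b by (simp add: field_simps)
  qed
  then have ev: "\<forall>\<^sub>F e in at_right 0. fC e \<le> ereal K * fB e"
    using eventually_at_right_less[of "0::real"] by (rule eventually_mono[rotated])
  have "Limsup (at_right 0) fC \<le> Limsup (at_right 0) (\<lambda>e. ereal K * fB e)"
    by (rule Limsup_mono[OF ev])
  also have "\<dots> = ereal K * Limsup (at_right 0) fB"
    by (rule Limsup_ereal_mult_left[OF _ K]) simp
  finally show "upper_mink s C \<le> ereal K * upper_mink s B"
    unfolding upper_mink_def fB_def fC_def .
  have "Liminf (at_right 0) fC \<le> Liminf (at_right 0) (\<lambda>e. ereal K * fB e)"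
    by (rule Liminf_mono[OF ev])
  also have "\<dots> = ereal K * Liminf (at_right 0) fB"
    by (rule Liminf_ereal_mult_left[OF _ K]) simp
  finally show "lower_mink s C \<le> ereal K * lower_mink s B"
    unfolding lower_mink_def fB_def fC_def .
qed

lemma mink_lipschitz_image_le:
  fixes B :: "'a::euclidean_space set" and h :: "'a \<Rightarrow> 'b::euclidean_space"
  assumes "bounded B" "L-lipschitz_on B h"
  obtains K where "K \<ge> 0" "\<And>s. upper_mink s (h`B) \<le> ereal K * upper_mink s B"
    "\<And>s. lower_mink s (h`B) \<le> ereal K * lower_mink s B"
  using nbhd_measure_lipschitz_image[OF assms] mink_le_of_nbhd_measure_le by metis

lemma inj_on_if_co_lipschitz:
  assumes "a > 0" and co_lip: "\<forall>u\<in>B. \<forall>v\<in>B. a * dist u v \<le> dist (h u) (h v)"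
  shows "inj_on h B"
proof (rule inj_onI)
  fix u v assume "u \<in> B" "v \<in> B" "h u = h v"
  then have "a * dist u v \<le> 0" using co_lip by force
  then show "u = v" using \<open>a > 0\<close> by (meson mult_pos_pos not_le zero_less_dist_iff)
qed

lemma lipschitz_on_inv_into:
  assumes "a > 0" and co_lip: "\<forall>u\<in>B. \<forall>v\<in>B. a * dist u v \<le> dist (h u) (h v)"
  shows "(1/a)-lipschitz_on (h ` B) (inv_into B h)"
proof (rule lipschitz_onI)
  fix x y assume "x \<in> h ` B" "y \<in> h ` B"
  then obtain u v where "u \<in> B" "v \<in> B" "x = h u" "y = h v" by blast
  moreover have "inj_on h B" using assms by (rule inj_on_if_co_lipschitz)
  ultimately show "dist (inv_into B h x) (inv_into B h y) \<le> 1/a * dist x y"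
    using co_lip \<open>a > 0\<close> by (simp add: field_simps)
qed (use assms in simp)

lemma ereal_mutually_bounded:
  fixes x y :: ereal
  assumes "x \<ge> 0" "y \<ge> 0" "a \<ge> 0" "b \<ge> 0" "x \<le> ereal a * y" "y \<le> ereal b * x"
  shows "x = 0 \<longleftrightarrow> y = 0" and "y < \<infinity> \<Longrightarrow> x < \<infinity>" and "0 < y \<Longrightarrow> 0 < x"
proof -
  show "x = 0 \<longleftrightarrow> y = 0" using assms by (auto intro: antisym)
  then show "0 < y \<Longrightarrow> 0 < x" using assms(1) by auto
  assume "y < \<infinity>"
  then have "ereal a * y < \<infinity>" using assms(2) by (cases y) auto
  then show "x < \<infinity>" using assms(5) by (rule le_less_trans[rotated])
qed

theorem bilipschitz_image_box_dim:
  fixes B :: "'a::euclidean_space set" and h :: "'a \<Rightarrow> 'b::euclidean_space"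
  assumes "bounded B" "L-lipschitz_on B h"
    and "a > 0" "\<forall>u\<in>B. \<forall>v\<in>B. a * dist u v \<le> dist (h u) (h v)"
  shows "upper_box_dim (h`B) = upper_box_dim B"
    and "lower_box_dim (h`B) = lower_box_dim B"
    and "mink_nondeg B \<Longrightarrow> mink_nondeg (h`B)"
proof -
  obtain K where K: "K \<ge> 0" "\<And>s. upper_mink s (h`B) \<le> ereal K * upper_mink s B"
    "\<And>s. lower_mink s (h`B) \<le> ereal K * lower_mink s B"
    using mink_lipschitz_image_le[OF assms(1,2)] by blast
  have "inj_on h B" using assms(3,4) by (rule inj_on_if_co_lipschitz)
  then have "inv_into B h ` h ` B = B" by simp
  then obtain K' where K': "K' \<ge> 0" "\<And>s. upper_mink s B \<le> ereal K' * upper_mink s (h`B)"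
    "\<And>s. lower_mink s B \<le> ereal K' * lower_mink s (h`B)"
    using mink_lipschitz_image_le[OF bounded_lipschitz_image[OF assms(1,2)]
        lipschitz_on_inv_into[OF assms(3,4)]] by metis
  note upper = ereal_mutually_bounded[OF mink_nonneg(1) mink_nonneg(1) K(1) K'(1) K(2) K'(2)]
  note lower = ereal_mutually_bounded[OF mink_nonneg(2) mink_nonneg(2) K(1) K'(1) K(3) K'(3)]
  show "upper_box_dim (h`B) = upper_box_dim B" unfolding upper_box_dim_def using upper(1) by metis
  show "lower_box_dim (h`B) = lower_box_dim B" unfolding lower_box_dim_def using lower(1) by metis
  assume "mink_nondeg B"
  then obtain d where d: "d \<ge> 0" "0 < lower_mink d B" "upper_mink d B < \<infinity>"
    unfolding mink_nondeg_def by blast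
  have "lower_mink d (h`B) \<le> upper_mink d (h`B)"
    unfolding lower_mink_def upper_mink_def by (rule Liminf_le_Limsup) simp
  then show "mink_nondeg (h`B)" unfolding mink_nondeg_def using d upper(2) lower(3) by blast
qed

section \<open>Stereographic projection as an inversion\<close>

lemma norm_power2_vec2: "norm (x::real^2)^2 = x$1^2 + x$2^2"
  by (simp only: power2_norm_eq_inner) (simp add: inner_vec_def sum_2 power2_eq_square)

lemma norm_power2_vec3: "norm (x::real^3)^2 = x$1^2 + x$2^2 + x$3^2"
  by (simp only: power2_norm_eq_inner) (simp add: inner_vec_def sum_3 power2_eq_square)

lemma norm_inversion: "norm (inversion x) = 1 / norm x"
  by (cases "x = 0") (simp_all add: inversion_def power2_eq_square)

lemma dist_inversion:
  fixes x y :: "'a::euclidean_space"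
  assumes "x \<noteq> 0" "y \<noteq> 0"
  shows "dist (inversion x) (inversion y) = dist x y / (norm x * norm y)"
proof -
  have nx: "norm x > 0" and ny: "norm y > 0" using assms by auto
  have inner_inv: "inversion x \<bullet> inversion y = (x \<bullet> y) / ((norm x)^2 * (norm y)^2)"
    unfolding inversion_def by (simp add: power2_eq_square)
  have "(dist (inversion x) (inversion y))^2
      = (norm (inversion x))^2 + (norm (inversion y))^2 - 2 * (inversion x \<bullet> inversion y)"
    using dot_norm_neg[of "inversion x" "inversion y"] by (simp add: dist_norm)
  also have "\<dots> = 1/(norm x)^2 + 1/(norm y)^2 - 2 * (x \<bullet> y) / ((norm x)^2 * (norm y)^2)"
    by (simp add: inner_inv norm_inversion power_divide)
  also have "\<dots> = (dist x y / (norm x * norm y))^2"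
  proof -
    have inner_eq: "x \<bullet> y = ((norm x)^2 + (norm y)^2 - (dist x y)^2) / 2"
      using dot_norm_neg[of x y] by (simp add: dist_norm)
    show ?thesis unfolding inner_eq using nx ny by (simp add: field_simps power2_eq_square)
  qed
  finally show ?thesis by (rule power2_eq_imp_eq) (use nx ny in auto)
qed

definition lift_plane :: "real^2 \<Rightarrow> real^3" where
  "lift_plane u = vector [u$1, u$2, 1]"

lemma norm_power2_lift_plane: "norm (lift_plane u)^2 = norm u^2 + 1"
  by (simp add: norm_power2_vec3 norm_power2_vec2 lift_plane_def)

lemma dist_lift_plane: "dist (lift_plane u) (lift_plane v) = dist u v"
proof -
  have "(dist (lift_plane u) (lift_plane v))^2 = (dist u v)^2"
    by (simp add: dist_norm norm_power2_vec3 norm_power2_vec2 lift_plane_def)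
  then show ?thesis by (rule power2_eq_imp_eq) auto
qed

lemma one_le_norm_lift_plane: "1 \<le> norm (lift_plane u)"
proof (rule power2_le_imp_le)
  show "1\<^sup>2 \<le> (norm (lift_plane u))\<^sup>2" using norm_power2_lift_plane[of u] by simp
qed simp

definition lifted_inversion :: "real^2 \<Rightarrow> real^3" where
  "lifted_inversion u = inversion (lift_plane u)"

lemma dist_lifted_inversion:
  "dist (lifted_inversion u) (lifted_inversion v)
     = dist u v / (norm (lift_plane u) * norm (lift_plane v))"
  using dist_inversion one_le_norm_lift_plane
  by (metis dist_lift_plane lifted_inversion_def norm_zero not_one_le_zero)

lemma lipschitz_on_lifted_inversion: "1-lipschitz_on U lifted_inversion"
proof (rule lipschitz_onI)
  fix u v
  have "1 \<le> norm (lift_plane u) * norm (lift_plane v)"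
    using one_le_norm_lift_plane[of u] one_le_norm_lift_plane[of v] mult_mono by fastforce
  then show "dist (lifted_inversion u) (lifted_inversion v) \<le> 1 * dist u v"
    unfolding dist_lifted_inversion by (simp add: divide_le_eq mult_le_cancel_left1)
qed simp

lemma lifted_inversion_co_lipschitz:
  assumes "norm u \<le> R" "norm v \<le> R"
  shows "1 / (R^2 + 1) * dist u v \<le> dist (lifted_inversion u) (lifted_inversion v)"
proof -
  have norm_le: "norm (lift_plane x) \<le> sqrt (R^2 + 1)" if "norm x \<le> R" for x
    using norm_power2_lift_plane[of x] power_mono[OF that norm_ge_zero]
    by (simp add: real_le_rsqrt)
  have "norm (lift_plane u) * norm (lift_plane v) \<le> sqrt (R^2+1) * sqrt (R^2+1)"
    using norm_le[OF assms(1)] norm_le[OF assms(2)] by (intro mult_mono) auto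
  then have "norm (lift_plane u) * norm (lift_plane v) \<le> R^2 + 1" by simp
  moreover have "norm (lift_plane u) * norm (lift_plane v) > 0"
    using one_le_norm_lift_plane[of u] one_le_norm_lift_plane[of v]
    by (meson less_le_trans mult_pos_pos zero_less_one)
  ultimately show ?thesis
    unfolding dist_lifted_inversion by (simp add: divide_left_mono)
qed

lemma mem_sphereS_iff: "q \<in> sphereS \<longleftrightarrow> q$1^2 + q$2^2 + (q$3 - 1/2)^2 = (1/2)^2"
proof -
  have "q \<in> sphereS \<longleftrightarrow> (dist (vector [0,0,1/2]) q)^2 = (1/2)^2"
    unfolding sphereS_def by (auto simp: power2_eq_iff_nonneg)
  also have "(dist (vector [0,0,1/2]) q)^2 = q$1^2 + q$2^2 + (q$3 - 1/2)^2"
    by (simp add: dist_norm norm_power2_vec3 power2_commute)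
  finally show ?thesis .
qed

lemma north_line_eq:
  "north + t *\<^sub>R (embed_plane p - north) = (vector [t * p$1, t * p$2, 1 - t] :: real^3)"
  by (simp add: vec_eq_iff forall_3 north_def embed_plane_def algebra_simps)

text \<open>A point \<open>N + t (p - N)\<close> of the line lies on the sphere iff \<open>t (t (1 + |p|\<^sup>2) - 1) = 0\<close>;
  the root \<open>t = 0\<close> is the north pole.\<close>

lemma stereo_eq:
  fixes p :: "real^2"
  defines "n \<equiv> p$1^2 + p$2^2"
  shows "stereo p = vector [p$1/(1+n), p$2/(1+n), n/(1+n)]"
  unfolding stereo_def
proof (rule the_equality)
  have n1: "1 + n > 0" unfolding n_def by (simp add: add_pos_nonneg)
  have on_sphere_iff: "vector [t * p$1, t * p$2, 1 - t] \<in> sphereS \<longleftrightarrow> t * (t * (1 + n) - 1) = 0"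
    for t :: real
  proof -
    have "vector [t * p$1, t * p$2, 1 - t] \<in> sphereS
        \<longleftrightarrow> (t * p$1)^2 + (t * p$2)^2 + (1 - t - 1/2)^2 = (1/2)^2"
      by (simp add: mem_sphereS_iff)
    also have "\<dots> \<longleftrightarrow> (t * p$1)^2 + (t * p$2)^2 + (1 - t - 1/2)^2 - (1/2)^2 = 0"
      by (rule eq_iff_diff_eq_0)
    also have "(t * p$1)^2 + (t * p$2)^2 + (1 - t - 1/2)^2 - (1/2)^2 = t * (t * (1 + n) - 1)"
      unfolding n_def by (simp add: algebra_simps power2_eq_square)
    finally show ?thesis .
  qed
  define t0 where "t0 = 1/(1+n)"
  have t0: "t0 * (1 + n) = 1" unfolding t0_def using n1 by simp
  have point: "vector [p$1/(1+n), p$2/(1+n), n/(1+n)] = (vector [t0 * p$1, t0 * p$2, 1 - t0] :: real^3)"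
    unfolding t0_def using n1 by (simp add: vec_eq_iff forall_3 field_simps)
  show "vector [p$1/(1+n), p$2/(1+n), n/(1+n)] \<in> sphereS
      \<and> vector [p$1/(1+n), p$2/(1+n), n/(1+n)] \<noteq> north
      \<and> (\<exists>t. vector [p$1/(1+n), p$2/(1+n), n/(1+n)] = north + t *\<^sub>R (embed_plane p - north))"
    unfolding point north_line_eq on_sphere_iff using t0 by (auto simp: north_def vec_eq_iff forall_3)
  fix q assume "q \<in> sphereS \<and> q \<noteq> north \<and> (\<exists>t. q = north + t *\<^sub>R (embed_plane p - north))"
  then obtain t where q: "q = vector [t * p$1, t * p$2, 1 - t]" and "q \<in> sphereS" "q \<noteq> north"
    unfolding north_line_eq by blast
  then have "t \<noteq> 0" by (auto simp: north_def)
  moreover have "t * (t * (1 + n) - 1) = 0" using \<open>q \<in> sphereS\<close> unfolding q on_sphere_iff .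
  ultimately have "t * (1 + n) = 1" by simp
  then have "t = t0" using n1 by (simp add: t0_def field_simps)
  then show "q = vector [p$1/(1+n), p$2/(1+n), n/(1+n)]" unfolding q point by simp
qed

lemma stereo_eq_lifted_inversion:
  fixes p :: "real^2"
  assumes "p \<noteq> 0"
  shows "stereo p = lifted_inversion (inversion p)"
proof -
  define n where "n = p$1^2 + p$2^2"
  have norm_p: "norm p ^ 2 = n" unfolding n_def by (rule norm_power2_vec2)
  then have n0: "n > 0" using assms by auto
  have lift: "lift_plane (inversion p) = vector [p$1/n, p$2/n, 1]"
    unfolding lift_plane_def inversion_def norm_power2_vec2 n_def by simp
  have "1 / norm (lift_plane (inversion p))^2 = n / (1 + n)"
    unfolding norm_power2_lift_plane norm_inversion power_divide norm_p
    using n0 by (simp add: field_simps)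
  then show ?thesis
    unfolding lifted_inversion_def inversion_def[of "lift_plane (inversion p)"] stereo_eq
    unfolding lift n_def[symmetric] using n0
    by (simp add: vec_eq_iff forall_3 field_simps)
qed

theorem proposition2p21:
  fixes A :: "(real^2) set"
  assumes "\<not> bounded A" and "0 \<notin> closure A"
  shows "upper_box_dim_unb A = upper_box_dim (stereo ` A)
     \<and> lower_box_dim_unb A = lower_box_dim (stereo ` A)
     \<and> (mink_nondeg_unb A \<longrightarrow> mink_nondeg (stereo ` A))"
proof -
  obtain r where r: "r > 0" "\<forall>p\<in>A. r \<le> norm p"
    using assms(2) unfolding closure_approachable by (force simp: not_less dist_norm)
  define B where "B = inversion ` A"
  have B_le: "\<forall>u\<in>B. norm u \<le> 1/r"
    using r unfolding B_def by (auto simp: norm_inversion intro!: frac_le)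
  then have "bounded B" using bounded_iff by blast
  have "stereo ` A = lifted_inversion ` B"
    unfolding B_def image_image using r
    by (intro image_cong refl stereo_eq_lifted_inversion) auto
  moreover have "\<forall>u\<in>B. \<forall>v\<in>B. 1 / ((1/r)^2 + 1) * dist u v
      \<le> dist (lifted_inversion u) (lifted_inversion v)"
    using B_le lifted_inversion_co_lipschitz by blast
  moreover have "1 / ((1/r)^2 + 1) > 0" by (simp add: add_nonneg_pos)
  ultimately show ?thesis
    using bilipschitz_image_box_dim[OF \<open>bounded B\<close> lipschitz_on_lifted_inversion]
    unfolding upper_box_dim_unb_def lower_box_dim_unb_def mink_nondeg_unb_def B_def[symmetric]
    by metis
qed

end
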